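(* Let $\mathcal{X}^*=\big((\mathbb{C}^* )^g\times\Delta^*\big)/\mathbb{Z}^g\to\Delta^*$ be a maximally degenerating family of polarized abelian varieties of type $E=\mathrm{diag}(e_1,\dots,e_g)$, written as below, so that for each $t\in\Delta^*$ the fibre is $\mathcal{X}_t=\mathbb{C}^g/\Lambda_t$ with $$\Lambda_t=E\mathbb{Z}^g\oplus\Omega'(t)\mathbb{Z}^g\subset\mathbb{C}^g,\qquad \Omega'(t)=\Big(\tfrac{e_i}{2\pi\sqrt{-1}}\log p_{i,j}(t)\Big)_{i,j}.$$ Suppose a group $H$ acts holomorphically on $\mathcal{X}^*$, preserving each fibre $\mathcal{X}_t$ and the class $c_1(\mathcal{L}_t)$ (the action need not preserve the zero section). Then for every $h\in H$ and $t\in\Delta^*$, the induced map $h_*\colon H_1(\mathcal{X}_t,\mathbb{Z})=\Lambda_t\to\Lambda_t$ preserves the first direct summand $E\mathbb{Z}^g\cong\mathbb{Z}^g$; denoting its restriction there by $l_h\in\mathrm{GL}(g,\mathbb{Z})$, the map $l\colon H\to\mathrm{GL}(g,\mathbb{Z})$, $h\mapsto l_h$, is a group homomorphism.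
   Context: $\Delta$ is the unit disc, $\Delta^*$ the punctured unit disc. Any maximally degenerating family (monodromy of maximal unipotency index) of polarized abelian varieties of dimension $g$ with polarization type $(e_1,\dots,e_g)$, $e_i\mid e_{i+1}$, can be written as $\big((\mathbb{C}^* )^g\times\Delta^*\big)/\mathbb{Z}^g$, where $m\in\mathbb{Z}^g$ acts by $Z_i\mapsto Z_i\prod_j p_{i,j}(t)^{m_j}$ for meromorphic functions $p_{i,j}$ on $\Delta$ with poles only at $0$ and $q_{i,j}:=p_{i,j}^{e_i}$ forming a symmetric matrix. Additive coordinates $z_i$ on $\mathbb{C}^g$ are related to the multiplicative ones by $Z_i=e^{2\pi\sqrt{-1}z_i/e_i}$; this identifies $\mathcal{X}_t=\mathbb{C}^g/\Lambda_t$ with $\Lambda_t$ as in the claim. $\mathcal{L}_t$ denotes the polarization on $\mathcal{X}_t$. *)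

theory Defs
  imports "HOL-Complex_Analysis.Complex_Analysis" "HOL-Algebra.Group"
begin

definition punct_disc :: "complex set" where
  "punct_disc = ball 0 1 - {0}"

definition expm :: "('g::finite \<Rightarrow> nat) \<Rightarrow> complex^'g \<Rightarrow> complex^'g" where
  "expm e z = (\<chi> i. exp (2 * of_real pi * \<i> * z$i / of_nat (e i)))"

definition Emb :: "('g::finite \<Rightarrow> nat) \<Rightarrow> int^'g \<Rightarrow> complex^'g" where
  "Emb e m = (\<chi> i. of_nat (e i) * of_int (m$i))"

definition qmat :: "('g::finite \<Rightarrow> 'g \<Rightarrow> complex \<Rightarrow> complex) \<Rightarrow> ('g \<Rightarrow> nat)
    \<Rightarrow> 'g \<Rightarrow> 'g \<Rightarrow> complex \<Rightarrow> complex" where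
  "qmat p e i j t = p i j t ^ e i"

definition dom_rep :: "((complex^'g::finite) \<times> complex) set" where
  "dom_rep = {(Z, t). (\<forall>i. Z$i \<noteq> 0) \<and> t \<in> punct_disc}"

(* the Z^g-equivalence:  m acts by Z_i |-> Z_i * prod_j p_{ij}(t)^{m_j} *)
definition zrel :: "('g::finite \<Rightarrow> 'g \<Rightarrow> complex \<Rightarrow> complex)
    \<Rightarrow> (complex^'g) \<times> complex \<Rightarrow> (complex^'g) \<times> complex \<Rightarrow> bool" where
  "zrel p x y \<longleftrightarrow> snd y = snd x \<and>
     (\<exists>m::int^'g. \<forall>i. fst y $ i = fst x $ i * (\<Prod>j\<in>UNIV. p i j (snd x) powi (m$j)))"

(* the lattice Lambda_t = E Z^g + Omega'(t) Z^g, i.e. the kernel of C^g -> X_t *)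
definition Lat :: "('g::finite \<Rightarrow> 'g \<Rightarrow> complex \<Rightarrow> complex) \<Rightarrow> ('g \<Rightarrow> nat)
    \<Rightarrow> complex \<Rightarrow> (complex^'g) set" where
  "Lat p e t = {z. \<exists>n::int^'g. \<forall>i.
      exp (2 * of_real pi * \<i> * z$i / of_nat (e i)) = (\<Prod>j\<in>UNIV. p i j t powi (n$j))}"

(* Y(t) = Im Omega'(t) = ( - log |q_{ij}(t)| / (2 pi) )_{ij} *)
definition ImOm :: "('g::finite \<Rightarrow> 'g \<Rightarrow> complex \<Rightarrow> complex) \<Rightarrow> ('g \<Rightarrow> nat)
    \<Rightarrow> complex \<Rightarrow> real^'g^'g" where
  "ImOm p e t = (\<chi> i j. - ln (cmod (qmat p e i j t)) / (2 * pi))"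

(* alternating Riemann form representing c_1(L_t): E(v,w) = Im (v^T Y^{-1} conj w) *)
definition c1form :: "('g::finite \<Rightarrow> 'g \<Rightarrow> complex \<Rightarrow> complex) \<Rightarrow> ('g \<Rightarrow> nat)
    \<Rightarrow> complex \<Rightarrow> complex^'g \<Rightarrow> complex^'g \<Rightarrow> real" where
  "c1form p e t v w = Im (\<Sum>i\<in>UNIV. \<Sum>j\<in>UNIV.
      v$i * of_real (matrix_inv (ImOm p e t) $ i $ j) * cnj (w$j))"

definition holo_on :: "((complex^'g::finite) \<times> complex \<Rightarrow> (complex^'g) \<times> complex)
    \<Rightarrow> ((complex^'g) \<times> complex) set \<Rightarrow> bool" where
  "holo_on G U \<longleftrightarrow> (\<forall>x\<in>U. \<exists>D. (G has_derivative D) (at x) \<and>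
      (\<forall>c v w. D (c *s v, c * w) = (c *s fst (D (v, w)), c * snd (D (v, w)))))"

(* f (a map on representatives) descends to a holomorphic self-map of X^* *)
definition holo_action_map :: "('g::finite \<Rightarrow> 'g \<Rightarrow> complex \<Rightarrow> complex)
    \<Rightarrow> ((complex^'g) \<times> complex \<Rightarrow> (complex^'g) \<times> complex) \<Rightarrow> bool" where
  "holo_action_map p f \<longleftrightarrow>
     (\<forall>x\<in>dom_rep. f x \<in> dom_rep) \<and>
     (\<forall>x\<in>dom_rep. \<forall>y\<in>dom_rep. zrel p x y \<longrightarrow> zrel p (f x) (f y)) \<and>
     (\<forall>x\<in>dom_rep. \<exists>U G. open U \<and> x \<in> U \<and> U \<subseteq> dom_rep \<and> holo_on G U \<and>
         (\<forall>y\<in>U. zrel p (G y) (f y)))"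

(* F : C^g -> C^g is a continuous lift (to the universal cover C^g of X_t) of the
   restriction of f to the fibre X_t; then f_* on H_1(X_t,Z) = Lambda_t is
   lambda |-> F(z + lambda) - F(z) *)
definition is_lift :: "('g::finite \<Rightarrow> 'g \<Rightarrow> complex \<Rightarrow> complex) \<Rightarrow> ('g \<Rightarrow> nat) \<Rightarrow> complex
    \<Rightarrow> ((complex^'g) \<times> complex \<Rightarrow> (complex^'g) \<times> complex) \<Rightarrow> (complex^'g \<Rightarrow> complex^'g) \<Rightarrow> bool" where
  "is_lift p e t f F \<longleftrightarrow> continuous_on UNIV F \<and>
     (\<forall>z. zrel p (expm e (F z), t) (f (expm e z, t)))"

end

(*
  A fibrewise holomorphic self-map f of X^* lifts, over each t, to a continuous map F of the
  universal cover C^g of X_t = C^g / Lambda_t.  As Lambda_t is discrete, F (z + v) - F z for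
  v in E Z^g is a lattice vector independent of z and of the chosen lift, and, computed with lifts
  that are continuous jointly in (z, t), it depends continuously on t.  Writing a lattice vector as
  E a + Omega'(t) n, the integer vector n is given by continuous "period coordinates", so it is
  constant on the connected base Delta^*.  Near t = 0 we have p_ij(t) = u_ij(t) t^(ord_ij) with
  u_ij holomorphic and non-vanishing, and the continuity of the section forces
  sum_j ord_ij n_j = 0, because t^k has a continuous logarithm on a small circle only if k = 0.
  Maximal degeneracy, det (ord_ij) ~= 0, then gives n = 0.  Hence f_* restricts to E Z^g as an
  integer matrix l_f independent of t, and composing lifts shows that f |-> l_f is multiplicative.
*)

theory Submission
  imports Defs
begin

no_notation fps_nth (infixl "$" 75)

lemma exp_2pi_i_eq_1_iff: "exp (2 * of_real pi * \<i> * z) = 1 \<longleftrightarrow> z \<in> \<int>"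
proof
  assume "exp (2 * of_real pi * \<i> * z) = 1"
  then obtain n :: int where "Re (2 * of_real pi * \<i> * z) = 0"
      "Im (2 * of_real pi * \<i> * z) = of_int (2 * n) * pi"
    unfolding exp_eq_1 by blast
  then have "z = of_int n" by (simp add: complex_eq_iff)
  then show "z \<in> \<int>" by simp
next
  assume "z \<in> \<int>"
  then show "exp (2 * of_real pi * \<i> * z) = 1" by (auto elim: Ints_cases simp: exp_eq_1)
qed

lemma exp_2pi_i_add_of_int:
  "exp (2 * of_real pi * \<i> * (z + of_int n)) = exp (2 * of_real pi * \<i> * z)"
proof -
  have "exp (2 * of_real pi * \<i> * of_int n) = 1" unfolding exp_2pi_i_eq_1_iff by simp
  then show ?thesis by (simp add: distrib_left exp_add)
qed

lemma continuous_Ints_valued_constant: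
  fixes f :: "'a::topological_space \<Rightarrow> 'b::real_normed_algebra_1"
  assumes "connected S" "continuous_on S f" "\<And>x. x \<in> S \<Longrightarrow> f x \<in> \<int>" "x \<in> S" "y \<in> S"
  shows "f x = f y"
proof -
  have "f constant_on S"
  proof (rule continuous_discrete_range_constant[OF assms(1,2)])
    fix x assume x: "x \<in> S"
    show "\<exists>e>0. \<forall>y. y \<in> S \<and> f y \<noteq> f x \<longrightarrow> e \<le> norm (f y - f x)"
    proof (intro exI[of _ 1] conjI allI impI)
      fix y assume y: "y \<in> S \<and> f y \<noteq> f x"
      then obtain a where "f y - f x = of_int a" "a \<noteq> 0"
        using assms(3) x by (metis Ints_cases Ints_diff eq_iff_diff_eq_0 of_int_0)
      then show "1 \<le> norm (f y - f x)" by simp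
    qed simp
  qed
  then show ?thesis using assms(4,5) unfolding constant_on_def by metis
qed

lemma continuous_int_vec_valued_constant:
  fixes f :: "'a::topological_space \<Rightarrow> real^'n"
  assumes "connected S" "continuous_on S f" "\<And>x. x \<in> S \<Longrightarrow> \<exists>n. f x = (\<chi> k. of_int (n $ k))"
  shows "\<exists>n. \<forall>x\<in>S. f x = (\<chi> k. of_int (n $ k))"
proof (cases "S = {}")
  case False
  then obtain x0 where x0: "x0 \<in> S" by blast
  then obtain n where n: "f x0 = (\<chi> k. of_int (n $ k))" using assms(3) by blast
  have "f x $ k \<in> \<int>" if "x \<in> S" for x k
    using assms(3)[OF that] by (metis Ints_of_int vec_lambda_beta)
  then have "f x $ k = f x0 $ k" if "x \<in> S" for x k
    using continuous_Ints_valued_constant[OF assms(1) continuous_on_component[OF assms(2)]] that x0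
    by meson
  then have "\<forall>x\<in>S. f x = (\<chi> k. of_int (n $ k))" using n by (simp add: vec_eq_iff)
  then show ?thesis by blast
qed simp

lemma continuous_on_if_locally_continuous:
  fixes g :: "'a::t2_space \<Rightarrow> 'b::topological_space"
  assumes "\<And>x. x \<in> S \<Longrightarrow> \<exists>N. open N \<and> x \<in> N \<and> continuous_on (N \<inter> S) g"
  shows "continuous_on S g"
  unfolding continuous_on_eq_continuous_within
proof
  fix x assume x: "x \<in> S"
  then obtain N where N: "open N" "x \<in> N" "continuous_on (N \<inter> S) g" using assms by blast
  have "continuous (at x within N \<inter> S) g"
    using N(2,3) x continuous_on_eq_continuous_within by blast
  moreover have "at x within N \<inter> S = at x within S"
    by (rule at_within_nhd[OF N(2,1)]) blast
  ultimately show "continuous (at x within S) g" by simp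
qed

lemma det_nonzero_if_positive_definite:
  fixes A :: "real^'n^'n"
  assumes "\<And>x. x \<noteq> 0 \<Longrightarrow> x \<bullet> (A *v x) > 0"
  shows "det A \<noteq> 0"
proof -
  have "\<forall>x. A *v x = 0 \<longrightarrow> x = 0" using assms by (metis inner_zero_right less_irrefl)
  then obtain B where "B ** A = mat 1" using matrix_left_invertible_ker by blast
  then show ?thesis using invertible_det_nz invertible_left_inverse by blast
qed

lemma continuous_on_det:
  fixes A :: "'a::topological_space \<Rightarrow> real^'n^'n"
  assumes "\<And>i j. continuous_on S (\<lambda>x. A x $ i $ j)"
  shows "continuous_on S (\<lambda>x. det (A x))"
  unfolding det_def by (intro continuous_intros assms)

lemma open_punct_disc: "open punct_disc"
  unfolding punct_disc_def by auto

lemma connected_punct_disc: "connected punct_disc"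
proof -
  have "aff_dim (ball (0::complex) 1) = 2" by (subst aff_dim_open) auto
  then show ?thesis unfolding punct_disc_def
    by (intro connected_punctured_convex convex_ball) simp
qed

lemma half_in_punct_disc: "(1/2 :: complex) \<in> punct_disc"
  by (simp add: punct_disc_def)

section \<open>Coordinates on the fibres\<close>

definition period_factor :: "('g::finite \<Rightarrow> 'g \<Rightarrow> complex \<Rightarrow> complex) \<Rightarrow> complex \<Rightarrow> int^'g
    \<Rightarrow> 'g \<Rightarrow> complex" where
  "period_factor p t m i = (\<Prod>j\<in>UNIV. p i j t powi (m $ j))"

definition imag_coord :: "('g::finite \<Rightarrow> nat) \<Rightarrow> complex^'g \<Rightarrow> real^'g" where
  "imag_coord e Z = (\<chi> i. - real (e i) * ln (cmod (Z $ i)) / (2 * pi))"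

definition cover :: "('g::finite \<Rightarrow> nat) \<Rightarrow> (complex^'g) \<times> complex \<Rightarrow> (complex^'g) \<times> complex" where
  "cover e y = (expm e (fst y), snd y)"

lemma zrel_iff:
  "zrel p x y \<longleftrightarrow> snd y = snd x \<and> (\<exists>m. \<forall>i. fst y $ i = fst x $ i * period_factor p (snd x) m i)"
  by (simp add: zrel_def period_factor_def)

lemma zrel_snd: "zrel p x y \<Longrightarrow> snd y = snd x"
  by (simp add: zrel_def)

lemma Lat_iff: "z \<in> Lat p e t \<longleftrightarrow> (\<exists>n. expm e z = (\<chi> i. period_factor p t n i))"
  by (simp add: Lat_def expm_def period_factor_def vec_eq_iff)

lemma period_factor_zero [simp]: "period_factor p t 0 i = 1"
  by (simp add: period_factor_def)

lemma period_factor_nonzero: "(\<And>i j. p i j t \<noteq> 0) \<Longrightarrow> period_factor p t m i \<noteq> 0"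
  by (simp add: period_factor_def)

lemma period_factor_add:
  "(\<And>i j. p i j t \<noteq> 0) \<Longrightarrow>
    period_factor p t (m + n) i = period_factor p t m i * period_factor p t n i"
  by (simp add: period_factor_def power_int_add prod.distrib)

lemma expm_nth: "expm e z $ i = exp (2 * of_real pi * \<i> * z $ i / of_nat (e i))"
  by (simp add: expm_def)

lemma expm_nonzero: "expm e z $ i \<noteq> 0"
  by (simp add: expm_nth)

lemma expm_add: "expm e (z + w) $ i = expm e z $ i * expm e w $ i"
  by (simp add: expm_nth add_divide_distrib distrib_left exp_add)

lemma expm_diff: "expm e (z - w) $ i = expm e z $ i / expm e w $ i"
  by (simp add: expm_nth diff_divide_distrib right_diff_distrib exp_diff)

lemma expm_eq_1_iff: "e i > 0 \<Longrightarrow> expm e z $ i = 1 \<longleftrightarrow> z $ i / of_nat (e i) \<in> \<int>"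
  using exp_2pi_i_eq_1_iff[of "z $ i / of_nat (e i)"] by (simp add: expm_nth)

lemma expm_Emb: "e i > 0 \<Longrightarrow> expm e (Emb e m) $ i = 1"
  by (simp add: expm_eq_1_iff Emb_def)

lemma expm_eq_1_imp_Emb:
  assumes "\<And>i. e i > 0" "\<And>i. expm e z $ i = 1"
  shows "\<exists>k. z = Emb e k"
proof -
  have "\<exists>k. z $ i / of_nat (e i) = of_int k" for i
    using assms expm_eq_1_iff by (metis Ints_cases)
  then obtain k where "\<And>i. z $ i / of_nat (e i) = of_int (k i)" by metis
  then have "z = Emb e (\<chi> i. k i)"
    using assms(1) by (simp add: Emb_def vec_eq_iff field_simps)
  then show ?thesis by blast
qed

lemma Emb_inj: "(\<And>i. e i > 0) \<Longrightarrow> Emb e m = Emb e n \<Longrightarrow> m = n"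
  by (simp add: Emb_def vec_eq_iff) (metis less_irrefl)

lemma Emb_add: "Emb e (m + n) = Emb e m + Emb e n"
  by (simp add: Emb_def vec_eq_iff distrib_left)

lemma continuous_on_expm [continuous_intros]:
  "continuous_on S A \<Longrightarrow> continuous_on S (\<lambda>x. expm e (A x))"
  unfolding expm_def by (auto intro!: continuous_intros simp: divide_inverse)

lemma continuous_on_cover: "continuous_on S (cover e)"
  unfolding cover_def by (intro continuous_intros)

lemma cover_in_dom_rep: "snd y \<in> punct_disc \<Longrightarrow> cover e y \<in> dom_rep"
  by (simp add: cover_def dom_rep_def expm_nonzero)

lemma expm_constant_imp_constant:
  assumes e_pos: "\<And>i. e i > 0" and S: "connected S" "continuous_on S A"
    and const: "\<And>x. x \<in> S \<Longrightarrow> expm e (A x) = c" and xy: "x \<in> S" "y \<in> S"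
  shows "A x = A y"
proof -
  have "A y $ i = A x $ i" for i
  proof -
    define d where "d w = (A w $ i - A x $ i) / of_nat (e i)" for w
    have "continuous_on S d" unfolding d_def using e_pos[of i] by (intro continuous_intros S) auto
    moreover have "d w \<in> \<int>" if "w \<in> S" for w
      using const[OF that] const[OF xy(1)] expm_eq_1_iff[of e i "A w - A x"] e_pos
        expm_nonzero[of e "A x" i]
      by (simp add: d_def expm_diff)
    ultimately have "d y = d x" using continuous_Ints_valued_constant[OF S(1)] xy by blast
    then show ?thesis using e_pos[of i] by (simp add: d_def)
  qed
  then show ?thesis by (simp add: vec_eq_iff)
qed

lemma continuous_expm_logarithm:
  fixes W :: "'a::real_normed_vector \<Rightarrow> complex^'g::finite"
  assumes e_pos: "\<And>i. e i > 0" and "contractible S" "continuous_on S W"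
    and nonzero: "\<And>y i. y \<in> S \<Longrightarrow> W y $ i \<noteq> 0"
  obtains \<Phi> where "continuous_on S \<Phi>" "\<And>y. y \<in> S \<Longrightarrow> expm e (\<Phi> y) = W y"
proof -
  have "\<exists>L. continuous_on S L \<and> (\<forall>y\<in>S. W y $ i = exp (L y))" for i
    using continuous_logarithm_on_contractible[OF continuous_on_component[OF assms(3)] assms(2)]
      nonzero by metis
  then obtain L where L: "\<And>i. continuous_on S (L i)" "\<And>i y. y \<in> S \<Longrightarrow> W y $ i = exp (L i y)"
    by metis
  define \<Phi> where "\<Phi> y = (\<chi> i. of_nat (e i) * L i y / (2 * of_real pi * \<i>))" for y
  show thesis
  proof
    show "continuous_on S \<Phi>" unfolding \<Phi>_def by (intro continuous_intros L) auto
    show "expm e (\<Phi> y) = W y" if "y \<in> S" for y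
      using e_pos L(2)[OF that] by (simp add: vec_eq_iff expm_nth \<Phi>_def)
  qed
qed

locale family_of_tori =
  fixes p :: "'g::finite \<Rightarrow> 'g \<Rightarrow> complex \<Rightarrow> complex" and e :: "'g \<Rightarrow> nat"
  assumes e_pos: "\<And>i. e i > 0"
    and p_holo: "\<And>i j. p i j holomorphic_on punct_disc"
    and p_nonzero: "\<And>i j t. t \<in> punct_disc \<Longrightarrow> p i j t \<noteq> 0"
    and det_ImOm_nonzero: "\<And>t. t \<in> punct_disc \<Longrightarrow> det (ImOm p e t) \<noteq> 0"
begin

lemma continuous_on_p_comp:
  "continuous_on S T \<Longrightarrow> T ` S \<subseteq> punct_disc \<Longrightarrow> continuous_on S (\<lambda>x. p i j (T x))"
  using continuous_on_compose2[OF holomorphic_on_imp_continuous_on[OF p_holo]] by blast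

lemma ImOm_nth:
  "t \<in> punct_disc \<Longrightarrow> ImOm p e t $ i $ j = - real (e i) * ln (cmod (p i j t)) / (2 * pi)"
  using p_nonzero[of t i j] by (simp add: ImOm_def qmat_def norm_power ln_realpow)

lemma ln_norm_period_factor:
  assumes "t \<in> punct_disc"
  shows "ln (cmod (period_factor p t m i)) = (\<Sum>j\<in>UNIV. of_int (m $ j) * ln (cmod (p i j t)))"
proof -
  have pos: "cmod (p i j t) > 0" for j using p_nonzero[OF assms] by simp
  have "ln (cmod (period_factor p t m i)) = (\<Sum>j\<in>UNIV. ln (cmod (p i j t) powi (m $ j)))"
    unfolding period_factor_def prod_norm[symmetric] norm_power_int
    using pos by (intro ln_prod) (auto simp: power_int_def)
  also have "\<dots> = (\<Sum>j\<in>UNIV. of_int (m $ j) * ln (cmod (p i j t)))"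
    using pos by (intro sum.cong refl) (simp add: powr_real_of_int'[symmetric] ln_powr)
  finally show ?thesis .
qed

lemma imag_coord_mult_period_factor:
  assumes "t \<in> punct_disc" "\<And>i. Z $ i \<noteq> 0"
  shows "imag_coord e (\<chi> i. Z $ i * period_factor p t m i)
    = imag_coord e Z + ImOm p e t *v (\<chi> j. of_int (m $ j))"
proof -
  have "cmod (period_factor p t m i) > 0" for i
    using period_factor_nonzero[of p t, OF p_nonzero[OF assms(1)]] by simp
  then show ?thesis
    using assms(2)
    by (simp add: imag_coord_def vec_eq_iff matrix_vector_mult_def norm_mult ln_mult
        ln_norm_period_factor[OF assms(1)] ImOm_nth[OF assms(1)] field_simps
        sum_divide_distrib sum_distrib_left sum_negf)
qed

text \<open>Writing \<open>Z = expm e z\<close> and \<open>z = E a + \<Omega>'(t) x\<close> with real \<open>a\<close> and \<open>x\<close>, we have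
  \<open>imag_coord e Z = Im z = Y(t) x\<close> with \<open>Y(t) = ImOm p e t\<close>.  The period coordinates of \<open>Z\<close> are
  \<open>x\<close>, computed by Cramer's rule so that their continuity in \<open>(Z, t)\<close> is evident.\<close>

definition period_coord :: "complex^'g \<Rightarrow> complex \<Rightarrow> real^'g" where
  "period_coord Z t = (\<chi> k. det (\<chi> i j. if j = k then imag_coord e Z $ i else ImOm p e t $ i $ j)
      / det (ImOm p e t))"

lemma period_coord_iff:
  "t \<in> punct_disc \<Longrightarrow> ImOm p e t *v x = imag_coord e Z \<longleftrightarrow> x = period_coord Z t"
  unfolding period_coord_def using cramer[OF det_ImOm_nonzero] by simp

lemma period_coord_mult_period_factor:
  assumes "t \<in> punct_disc" "\<And>i. Z $ i \<noteq> 0"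
  shows "period_coord (\<chi> i. Z $ i * period_factor p t m i) t
    = period_coord Z t + (\<chi> j. of_int (m $ j))"
proof -
  have "ImOm p e t *v (period_coord Z t + (\<chi> j. of_int (m $ j)))
      = imag_coord e (\<chi> i. Z $ i * period_factor p t m i)"
    using period_coord_iff[OF assms(1)] imag_coord_mult_period_factor[OF assms]
    by (simp add: matrix_vector_right_distrib)
  then show ?thesis using period_coord_iff[OF assms(1)] by metis
qed

lemma period_coord_period_factor:
  assumes "t \<in> punct_disc"
  shows "period_coord (\<chi> i. period_factor p t m i) t = (\<chi> j. of_int (m $ j))"
proof -
  have "ImOm p e t *v 0 = imag_coord e (\<chi> i. 1)" by (simp add: imag_coord_def vec_eq_iff)
  then have "period_coord (\<chi> i. 1) t = 0" using period_coord_iff[OF assms] by metis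
  then show ?thesis using period_coord_mult_period_factor[OF assms, of "\<chi> i. 1" m] by simp
qed

lemma continuous_on_period_coord:
  assumes "continuous_on S Z" "continuous_on S T"
    and "\<And>x. x \<in> S \<Longrightarrow> T x \<in> punct_disc \<and> (\<forall>i. Z x $ i \<noteq> 0)"
  shows "continuous_on S (\<lambda>x. period_coord (Z x) (T x))"
proof -
  have ImOm: "continuous_on S (\<lambda>x. ImOm p e (T x) $ i $ j)" for i j
    unfolding ImOm_def qmat_def using assms(3) p_nonzero
    by (auto intro!: continuous_intros continuous_on_p_comp assms(2))
  have imag: "continuous_on S (\<lambda>x. imag_coord e (Z x) $ i)" for i
    unfolding imag_coord_def using assms(3) by (auto intro!: continuous_intros assms(1))
  have "continuous_on S (\<lambda>x. det (\<chi> i j. if j = k then imag_coord e (Z x) $ i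
      else ImOm p e (T x) $ i $ j))" for k
  proof (rule continuous_on_det)
    fix i j
    show "continuous_on S (\<lambda>x. (\<chi> i j. if j = k then imag_coord e (Z x) $ i
        else ImOm p e (T x) $ i $ j) $ i $ j)"
      by (cases "j = k") (simp_all add: ImOm imag)
  qed
  moreover have "continuous_on S (\<lambda>x. det (ImOm p e (T x)))"
    by (rule continuous_on_det) (simp add: ImOm)
  ultimately show ?thesis
    unfolding period_coord_def using assms(3) det_ImOm_nonzero
    by (intro continuous_on_vec_lambda continuous_on_divide) auto
qed

lemma continuous_on_period_factor:
  "continuous_on S T \<Longrightarrow> T ` S \<subseteq> punct_disc \<Longrightarrow> continuous_on S (\<lambda>x. period_factor p (T x) m i)"
  unfolding period_factor_def using p_nonzero
  by (intro continuous_on_prod continuous_on_power_int continuous_on_p_comp) auto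

lemma zrel_sym:
  assumes "snd x \<in> punct_disc" "zrel p x y"
  shows "zrel p y x"
proof -
  obtain m where m: "snd y = snd x" "\<And>i. fst y $ i = fst x $ i * period_factor p (snd x) m i"
    using assms(2) unfolding zrel_iff by blast
  have "fst x $ i = fst y $ i * period_factor p (snd y) (- m) i" for i
    using period_factor_add[of p "snd x" m "- m" i] p_nonzero[OF assms(1)] m by simp
  then show ?thesis unfolding zrel_iff using m by auto
qed

lemma zrel_trans:
  assumes "snd x \<in> punct_disc" "zrel p x y" "zrel p y z"
  shows "zrel p x z"
proof -
  obtain m where m: "snd y = snd x" "\<And>i. fst y $ i = fst x $ i * period_factor p (snd x) m i"
    using assms(2) unfolding zrel_iff by blast
  obtain n where n: "snd z = snd y" "\<And>i. fst z $ i = fst y $ i * period_factor p (snd y) n i"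
    using assms(3) unfolding zrel_iff by blast
  have "fst z $ i = fst x $ i * period_factor p (snd x) (m + n) i" for i
    using period_factor_add[of p "snd x" m n i] p_nonzero[OF assms(1)] m n by simp
  then show ?thesis unfolding zrel_iff using m n by auto
qed

lemma zrel_period_coord:
  assumes t: "t \<in> punct_disc" and W: "\<And>i. W $ i \<noteq> 0" and rel: "zrel p (G, t) (W, t)"
  shows "\<exists>m. W = (\<chi> i. G $ i * period_factor p t m i) \<and> (\<forall>i. G $ i \<noteq> 0) \<and>
    period_coord W t = period_coord G t + (\<chi> k. of_int (m $ k))"
proof -
  obtain m where m: "W = (\<chi> i. G $ i * period_factor p t m i)"
    using rel unfolding zrel_iff by (auto simp: vec_eq_iff)
  have G: "G $ i \<noteq> 0" for i using W[of i] m by (metis mult_eq_0_iff vec_lambda_beta)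
  have "period_coord W t = period_coord G t + (\<chi> k. of_int (m $ k))"
    unfolding m by (rule period_coord_mult_period_factor[OF t G])
  with m G show ?thesis by blast
qed

lemma zrel_expm_imp_diff_in_Lat:
  assumes "zrel p (expm e z, t) (expm e w, t)"
  shows "w - z \<in> Lat p e t"
proof -
  obtain n where "\<And>i. expm e w $ i = expm e z $ i * period_factor p t n i"
    using assms unfolding zrel_iff by auto
  then have "expm e (w - z) = (\<chi> i. period_factor p t n i)"
    by (simp add: vec_eq_iff expm_diff expm_nonzero)
  then show ?thesis unfolding Lat_iff by blast
qed

text \<open>The index \<open>n\<close> of a lattice vector is its period coordinate, which is continuous; so it
  cannot jump along a connected family.\<close>

lemma Lat_index_constant:
  assumes S: "connected S" "continuous_on S A" "continuous_on S T"
    and T: "\<And>x. x \<in> S \<Longrightarrow> T x \<in> punct_disc" and Lat: "\<And>x. x \<in> S \<Longrightarrow> A x \<in> Lat p e (T x)"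
  shows "\<exists>n. \<forall>x\<in>S. expm e (A x) = (\<chi> i. period_factor p (T x) n i)"
proof -
  define c where "c x = period_coord (expm e (A x)) (T x)" for x
  have c_index: "c x = (\<chi> k. of_int (n $ k))"
    if "x \<in> S" "expm e (A x) = (\<chi> i. period_factor p (T x) n i)" for x n
    unfolding c_def that(2) by (rule period_coord_period_factor[OF T[OF that(1)]])
  have "continuous_on S c"
    unfolding c_def using T expm_nonzero
    by (intro continuous_on_period_coord continuous_intros S) auto
  moreover have "\<exists>n. c x = (\<chi> k. of_int (n $ k))" if "x \<in> S" for x
    using Lat[OF that] c_index[OF that] unfolding Lat_iff by blast
  ultimately have "\<exists>n0. \<forall>x\<in>S. c x = (\<chi> k. of_int (n0 $ k))"
    by (rule continuous_int_vec_valued_constant[OF S(1)])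
  then obtain n0 where n0: "\<forall>x\<in>S. c x = (\<chi> k. of_int (n0 $ k))" by blast
  have "expm e (A x) = (\<chi> i. period_factor p (T x) n0 i)" if x: "x \<in> S" for x
  proof -
    obtain n where n: "expm e (A x) = (\<chi> i. period_factor p (T x) n i)"
      using Lat[OF x] unfolding Lat_iff by blast
    have "n = n0" using c_index[OF x n] n0 x by (simp add: vec_eq_iff)
    with n show ?thesis by simp
  qed
  then show ?thesis by blast
qed

lemma Lat_valued_constant:
  assumes "t \<in> punct_disc" "connected S" "continuous_on S A" "\<And>x. x \<in> S \<Longrightarrow> A x \<in> Lat p e t"
    and "x \<in> S" "y \<in> S"
  shows "A x = A y"
proof -
  obtain n where "\<And>x. x \<in> S \<Longrightarrow> expm e (A x) = (\<chi> i. period_factor p t n i)"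
    using Lat_index_constant[OF assms(2,3) continuous_on_const] assms(1,4) by blast
  then show ?thesis by (rule expm_constant_imp_constant[OF e_pos assms(2,3) _ assms(5,6)])
qed

section \<open>Continuous lifts\<close>

text \<open>\<open>W y\<close> represents a point of the fibre over \<open>snd y\<close>; the map into the fibres is continuous
  if \<open>W\<close> locally agrees, up to the action of \<open>\<int>\<^sup>g\<close>, with a continuous map.\<close>

definition continuous_mod_periods
    :: "((complex^'g) \<times> complex) set \<Rightarrow> ((complex^'g) \<times> complex \<Rightarrow> complex^'g) \<Rightarrow> bool" where
  "continuous_mod_periods S W \<longleftrightarrow> (\<forall>y0\<in>S. \<exists>N G. open N \<and> y0 \<in> N \<and> continuous_on (N \<inter> S) G \<and>
      (\<forall>y\<in>N \<inter> S. zrel p (G y, snd y) (W y, snd y)))"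

lemma continuous_mod_periods_exp_period_coord:
  assumes W: "continuous_mod_periods S W"
    and S: "snd ` S \<subseteq> punct_disc" "\<And>y i. y \<in> S \<Longrightarrow> W y $ i \<noteq> 0"
  shows "continuous_on S (\<lambda>y. exp (2 * of_real pi * \<i> * of_real (period_coord (W y) (snd y) $ k)))"
proof (rule continuous_on_if_locally_continuous)
  fix y0 assume "y0 \<in> S"
  then obtain N G where N: "open N" "y0 \<in> N" "continuous_on (N \<inter> S) G"
    and G: "\<forall>y\<in>N \<inter> S. zrel p (G y, snd y) (W y, snd y)"
    using W unfolding continuous_mod_periods_def by meson
  have same: "exp (2 * of_real pi * \<i> * of_real (period_coord (W y) (snd y) $ k))
      = exp (2 * of_real pi * \<i> * of_real (period_coord (G y) (snd y) $ k))"
    and G_nonzero: "\<forall>i. G y $ i \<noteq> 0" if y: "y \<in> N \<inter> S" for y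
  proof -
    have t: "snd y \<in> punct_disc" and yS: "y \<in> S" using S(1) y by auto
    obtain m where "\<forall>i. G y $ i \<noteq> 0"
        "period_coord (W y) (snd y) = period_coord (G y) (snd y) + (\<chi> k. of_int (m $ k))"
      using zrel_period_coord[OF t S(2)[OF yS] bspec[OF G y]] by blast
    then show "\<forall>i. G y $ i \<noteq> 0"
      "exp (2 * of_real pi * \<i> * of_real (period_coord (W y) (snd y) $ k))
        = exp (2 * of_real pi * \<i> * of_real (period_coord (G y) (snd y) $ k))"
      by (simp_all add: exp_2pi_i_add_of_int)
  qed
  have "continuous_on (N \<inter> S) (\<lambda>y. period_coord (G y) (snd y))"
    using S(1) G_nonzero
    by (intro continuous_on_period_coord[OF N(3) continuous_on_snd[OF continuous_on_id]]) blast
  then have "continuous_on (N \<inter> S)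
      (\<lambda>y. exp (2 * of_real pi * \<i> * of_real (period_coord (G y) (snd y) $ k)))"
    by (intro continuous_intros)
  then have "continuous_on (N \<inter> S)
      (\<lambda>y. exp (2 * of_real pi * \<i> * of_real (period_coord (W y) (snd y) $ k)))"
    by (rule continuous_on_eq) (simp_all add: same)
  with N(1,2) show "\<exists>N. open N \<and> y0 \<in> N \<and> continuous_on (N \<inter> S)
      (\<lambda>y. exp (2 * of_real pi * \<i> * of_real (period_coord (W y) (snd y) $ k)))" by blast
qed

lemma continuous_mod_periods_real_lift:
  assumes W: "continuous_mod_periods S W" and S: "convex S" "snd ` S \<subseteq> punct_disc"
    and nonzero: "\<And>y i. y \<in> S \<Longrightarrow> W y $ i \<noteq> 0"
  obtains b n where "continuous_on S b"
    "\<And>y. y \<in> S \<Longrightarrow> b y = period_coord (W y) (snd y) + (\<chi> k. of_int (n y $ k))"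
proof -
  define \<sigma> where "\<sigma> k y = exp (2 * of_real pi * \<i> * of_real (period_coord (W y) (snd y) $ k))"
    for k y
  have "\<exists>c. continuous_on S c \<and> (\<forall>y\<in>S. \<sigma> k y = exp (c y))" for k
    using continuous_logarithm_on_contractible[OF
        continuous_mod_periods_exp_period_coord[OF W S(2) nonzero] convex_imp_contractible[OF S(1)]]
    unfolding \<sigma>_def by (metis exp_not_eq_zero)
  then obtain c where c: "\<And>k. continuous_on S (c k)" "\<And>k y. y \<in> S \<Longrightarrow> \<sigma> k y = exp (c k y)"
    by metis
  define b where "b y = (\<chi> k. Re (c k y / (2 * of_real pi * \<i>)))" for y
  have "\<exists>n. b y $ k = period_coord (W y) (snd y) $ k + of_int n" if y: "y \<in> S" for y k
  proof -
    have "exp (2 * of_real pi * \<i> * (c k y / (2 * of_real pi * \<i>)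
        - of_real (period_coord (W y) (snd y) $ k))) = exp (c k y) / \<sigma> k y"
      unfolding \<sigma>_def by (simp add: right_diff_distrib exp_diff)
    also have "\<dots> = 1" using c(2)[OF y] by simp
    finally obtain n where "c k y / (2 * of_real pi * \<i>) - of_real (period_coord (W y) (snd y) $ k)
        = of_int n"
      unfolding exp_2pi_i_eq_1_iff by (auto elim: Ints_cases)
    then have "c k y / (2 * of_real pi * \<i>) = of_real (period_coord (W y) (snd y) $ k + of_int n)"
      by (simp add: algebra_simps)
    then show ?thesis unfolding b_def by (metis Re_complex_of_real vec_lambda_beta)
  qed
  note int_part = this
  define n where "n y = (\<chi> k. \<lfloor>b y $ k - period_coord (W y) (snd y) $ k\<rfloor>)" for y
  have "b y $ k = period_coord (W y) (snd y) $ k + of_int (n y $ k)" if "y \<in> S" for y k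
    using int_part[OF that, of k] by (auto simp: n_def)
  then have eq: "b y = period_coord (W y) (snd y) + (\<chi> k. of_int (n y $ k))" if "y \<in> S" for y
    using that by (simp add: vec_eq_iff)
  have "continuous_on S b" unfolding b_def by (intro continuous_intros c(1)) auto
  from that[OF this eq] show thesis .
qed

text \<open>On a connected set where \<open>W\<close> agrees with a continuous \<open>G\<close> modulo periods, the index relating
  the normalised representative to \<open>G\<close> is a continuous integer vector, hence constant.\<close>

lemma continuous_on_normalised_representative:
  assumes C: "connected C" "snd ` C \<subseteq> punct_disc"
    and G: "continuous_on C G" "\<And>y. y \<in> C \<Longrightarrow> zrel p (G y, snd y) (W y, snd y)"
    and nonzero: "\<And>y i. y \<in> C \<Longrightarrow> W y $ i \<noteq> 0"
    and b: "continuous_on C b"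
      "\<And>y. y \<in> C \<Longrightarrow> b y = period_coord (W y) (snd y) + (\<chi> k. of_int (n y $ k))"
  shows "continuous_on C (\<lambda>y. \<chi> i. W y $ i * period_factor p (snd y) (n y) i)"
proof -
  have index: "\<exists>m. W y = (\<chi> i. G y $ i * period_factor p (snd y) m i) \<and> (\<forall>i. G y $ i \<noteq> 0) \<and>
      b y - period_coord (G y) (snd y) = (\<chi> k. of_int ((m + n y) $ k))" if y: "y \<in> C" for y
  proof -
    obtain m where "W y = (\<chi> i. G y $ i * period_factor p (snd y) m i)" "\<forall>i. G y $ i \<noteq> 0"
        "period_coord (W y) (snd y) = period_coord (G y) (snd y) + (\<chi> k. of_int (m $ k))"
      using zrel_period_coord[OF _ nonzero[OF y] G(2)[OF y]] y C(2) by blast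
    then show ?thesis using b(2)[OF y] by (auto simp: vec_eq_iff)
  qed
  have "continuous_on C (\<lambda>y. period_coord (G y) (snd y))"
    using index C(2)
    by (intro continuous_on_period_coord[OF G(1) continuous_on_snd[OF continuous_on_id]]) blast
  then have "continuous_on C (\<lambda>y. b y - period_coord (G y) (snd y))"
    by (rule continuous_on_diff[OF b(1)])
  moreover have "\<exists>k. b y - period_coord (G y) (snd y) = (\<chi> i. of_int (k $ i))" if "y \<in> C" for y
    using index[OF that] by blast
  ultimately have "\<exists>k0. \<forall>y\<in>C. b y - period_coord (G y) (snd y) = (\<chi> k. of_int (k0 $ k))"
    by (rule continuous_int_vec_valued_constant[OF C(1)])
  then obtain k0 where k0: "\<forall>y\<in>C. b y - period_coord (G y) (snd y) = (\<chi> k. of_int (k0 $ k))"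
    by blast
  have "(\<chi> i. W y $ i * period_factor p (snd y) (n y) i)
      = (\<chi> i. G y $ i * period_factor p (snd y) k0 i)" if y: "y \<in> C" for y
  proof -
    obtain m where m: "W y = (\<chi> i. G y $ i * period_factor p (snd y) m i)"
      and "b y - period_coord (G y) (snd y) = (\<chi> k. of_int ((m + n y) $ k))"
      using index[OF y] by blast
    then have "m + n y = k0" using k0 y by (simp add: vec_eq_iff flip: of_int_add)
    moreover have "snd y \<in> punct_disc" using y C(2) by auto
    ultimately have "period_factor p (snd y) m i * period_factor p (snd y) (n y) i
        = period_factor p (snd y) k0 i" for i
      using period_factor_add[of p "snd y" m "n y" i] p_nonzero by simp
    then show ?thesis using m by (simp add: vec_eq_iff mult.assoc)
  qed
  moreover have "continuous_on C (\<lambda>y. \<chi> i. G y $ i * period_factor p (snd y) k0 i)"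
    using C(2) by (intro continuous_on_vec_lambda continuous_on_mult continuous_on_component G(1)
        continuous_on_period_factor[OF continuous_on_snd[OF continuous_on_id]]) auto
  ultimately show ?thesis by (metis (no_types, lifting) continuous_on_eq)
qed

lemma continuous_mod_periods_normalise:
  assumes W: "continuous_mod_periods S W" and S: "convex S" "snd ` S \<subseteq> punct_disc"
    and nonzero: "\<And>y i. y \<in> S \<Longrightarrow> W y $ i \<noteq> 0"
    and b: "continuous_on S b"
      "\<And>y. y \<in> S \<Longrightarrow> b y = period_coord (W y) (snd y) + (\<chi> k. of_int (n y $ k))"
  shows "continuous_on S (\<lambda>y. \<chi> i. W y $ i * period_factor p (snd y) (n y) i)"
proof (rule continuous_on_if_locally_continuous)
  fix y0 assume y0: "y0 \<in> S"
  then obtain N G where N: "open N" "y0 \<in> N" "continuous_on (N \<inter> S) G"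
    and G: "\<forall>y\<in>N \<inter> S. zrel p (G y, snd y) (W y, snd y)"
    using W unfolding continuous_mod_periods_def by meson
  obtain r where r: "r > 0" "ball y0 r \<subseteq> N" using N(1,2) open_contains_ball by blast
  then have sub: "ball y0 r \<inter> S \<subseteq> N \<inter> S" by blast
  have "continuous_on (ball y0 r \<inter> S) (\<lambda>y. \<chi> i. W y $ i * period_factor p (snd y) (n y) i)"
  proof (rule continuous_on_normalised_representative)
    show "connected (ball y0 r \<inter> S)" by (intro convex_connected convex_Int convex_ball S(1))
    show "continuous_on (ball y0 r \<inter> S) G" by (rule continuous_on_subset[OF N(3) sub])
    show "continuous_on (ball y0 r \<inter> S) b" by (rule continuous_on_subset[OF b(1)]) blast
  qed (use S(2) G sub nonzero b(2) in auto)
  with r(1) show "\<exists>N. open N \<and> y0 \<in> N \<and>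
      continuous_on (N \<inter> S) (\<lambda>y. \<chi> i. W y $ i * period_factor p (snd y) (n y) i)"
    by (intro exI[of _ "ball y0 r"]) simp
qed

lemma continuous_mod_periods_lift:
  assumes W: "continuous_mod_periods S W" and S: "convex S" "snd ` S \<subseteq> punct_disc"
    and nonzero: "\<And>y i. y \<in> S \<Longrightarrow> W y $ i \<noteq> 0"
  obtains \<Phi> where "continuous_on S \<Phi>" "\<And>y. y \<in> S \<Longrightarrow> zrel p (expm e (\<Phi> y), snd y) (W y, snd y)"
proof -
  obtain b n where b: "continuous_on S b"
      "\<And>y. y \<in> S \<Longrightarrow> b y = period_coord (W y) (snd y) + (\<chi> k. of_int (n y $ k))"
    using continuous_mod_periods_real_lift[OF W S nonzero] by metis
  define W' where "W' y = (\<chi> i. W y $ i * period_factor p (snd y) (n y) i)" for y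
  have "continuous_on S W'"
    unfolding W'_def by (rule continuous_mod_periods_normalise[OF W S nonzero b])
  moreover have "W' y $ i \<noteq> 0" if "y \<in> S" for y i
    using nonzero[OF that] period_factor_nonzero[of p "snd y", OF p_nonzero] that S(2)
    by (auto simp: W'_def)
  ultimately obtain \<Phi> where \<Phi>: "continuous_on S \<Phi>" "\<And>y. y \<in> S \<Longrightarrow> expm e (\<Phi> y) = W' y"
    using continuous_expm_logarithm[of e, OF e_pos convex_imp_contractible[OF S(1)]] by metis
  show thesis
  proof (rule that[OF \<Phi>(1)])
    fix y assume y: "y \<in> S"
    then have "snd y \<in> punct_disc" using S(2) by auto
    then have "W y $ i = expm e (\<Phi> y) $ i * period_factor p (snd y) (- n y) i" for i
      using \<Phi>(2)[OF y] period_factor_add[of p "snd y" "n y" "- n y" i] p_nonzero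
      by (simp add: W'_def mult.assoc)
    then show "zrel p (expm e (\<Phi> y), snd y) (W y, snd y)" unfolding zrel_iff by auto
  qed
qed

end

locale fibrewise_map = family_of_tori p e
  for p :: "'g::finite \<Rightarrow> 'g \<Rightarrow> complex \<Rightarrow> complex" and e +
  fixes f :: "(complex^'g) \<times> complex \<Rightarrow> (complex^'g) \<times> complex"
  assumes f_holo: "holo_action_map p f"
    and f_fibre: "\<And>x. x \<in> dom_rep \<Longrightarrow> snd (f x) = snd x"
begin

lemma f_dom_rep: "x \<in> dom_rep \<Longrightarrow> f x \<in> dom_rep"
  using f_holo unfolding holo_action_map_def by blast

lemma f_zrel: "x \<in> dom_rep \<Longrightarrow> y \<in> dom_rep \<Longrightarrow> zrel p x y \<Longrightarrow> zrel p (f x) (f y)"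
  using f_holo unfolding holo_action_map_def by blast

lemma continuous_mod_periods_f_cover:
  assumes "snd ` S \<subseteq> punct_disc"
  shows "continuous_mod_periods S (\<lambda>y. fst (f (cover e y)))"
  unfolding continuous_mod_periods_def
proof
  fix y0 assume "y0 \<in> S"
  then have "cover e y0 \<in> dom_rep" using assms cover_in_dom_rep by blast
  then obtain U G where U: "open U" "cover e y0 \<in> U" "U \<subseteq> dom_rep" "holo_on G U"
    and G: "\<forall>x\<in>U. zrel p (G x) (f x)"
    using f_holo unfolding holo_action_map_def by meson
  have "continuous_on U G"
    using U(4) unfolding holo_on_def
    by (meson continuous_at_imp_continuous_on has_derivative_continuous)
  define N where "N = cover e -` U"
  have "open N"
    unfolding N_def using U(1) continuous_on_cover[of UNIV e]
    by (metis continuous_on_eq_continuous_at continuous_open_vimage open_UNIV UNIV_I)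
  have "continuous_on N (\<lambda>y. G (cover e y))"
    by (rule continuous_on_compose2[OF \<open>continuous_on U G\<close> continuous_on_cover]) (auto simp: N_def)
  then have cont: "continuous_on (N \<inter> S) (\<lambda>y. fst (G (cover e y)))"
    by (rule continuous_on_fst[OF continuous_on_subset]) auto
  have "zrel p (fst (G (cover e y)), snd y) (fst (f (cover e y)), snd y)" if y: "y \<in> N \<inter> S" for y
  proof -
    have zr: "zrel p (G (cover e y)) (f (cover e y))" using G y by (simp add: N_def)
    have "snd (f (cover e y)) = snd y" using f_fibre U(3) y by (auto simp: N_def cover_def)
    moreover have "snd (G (cover e y)) = snd (f (cover e y))" using zr by (simp add: zrel_def)
    ultimately show ?thesis using zr by (metis prod.collapse)
  qed
  moreover have "y0 \<in> N" using U(2) by (simp add: N_def)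
  ultimately show "\<exists>N G. open N \<and> y0 \<in> N \<and> continuous_on (N \<inter> S) G \<and>
      (\<forall>y\<in>N \<inter> S. zrel p (G y, snd y) (fst (f (cover e y)), snd y))"
    using \<open>open N\<close> cont by (intro exI[of _ N] exI[of _ "\<lambda>y. fst (G (cover e y))"]) simp
qed

lemma lift_exists_on:
  assumes B: "convex B" "B \<subseteq> punct_disc"
  obtains \<Phi> where "continuous_on (UNIV \<times> B) \<Phi>"
    "\<And>z t. t \<in> B \<Longrightarrow> zrel p (expm e (\<Phi> (z, t)), t) (f (expm e z, t))"
proof -
  have S: "convex (UNIV \<times> B)" "snd ` (UNIV \<times> B) \<subseteq> punct_disc" using B by (auto intro: convex_Times)
  have f_cover: "f (cover e y) = (fst (f (cover e y)), snd y)" if "snd y \<in> punct_disc" for y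
    using f_fibre[OF cover_in_dom_rep[of y e, OF that]] by (simp add: cover_def prod_eq_iff)
  have "fst (f (cover e y)) $ i \<noteq> 0" if "y \<in> UNIV \<times> B" for y i
  proof -
    have "snd y \<in> punct_disc" using that B(2) by auto
    then have "f (cover e y) \<in> dom_rep" by (rule f_dom_rep[OF cover_in_dom_rep])
    then show ?thesis by (auto simp: dom_rep_def)
  qed
  then obtain \<Phi> where \<Phi>: "continuous_on (UNIV \<times> B) \<Phi>"
      "\<And>y. y \<in> UNIV \<times> B \<Longrightarrow> zrel p (expm e (\<Phi> y), snd y) (fst (f (cover e y)), snd y)"
    using continuous_mod_periods_lift[OF continuous_mod_periods_f_cover[OF S(2)] S] by metis
  show thesis
  proof (rule that[OF \<Phi>(1)])
    fix z t assume "t \<in> B"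
    then show "zrel p (expm e (\<Phi> (z, t)), t) (f (expm e z, t))"
      using \<Phi>(2)[of "(z, t)"] f_cover[of "(z, t)"] B(2) by (auto simp: cover_def)
  qed
qed

lemma lift_exists: "t \<in> punct_disc \<Longrightarrow> \<exists>F. is_lift p e t f F"
proof -
  assume t: "t \<in> punct_disc"
  then obtain \<Phi> where \<Phi>: "continuous_on (UNIV \<times> {t}) \<Phi>"
      "\<And>z. zrel p (expm e (\<Phi> (z, t)), t) (f (expm e z, t))"
    using lift_exists_on[of "{t}"] by auto
  have "continuous_on UNIV (\<lambda>z. \<Phi> (z, t))"
    by (rule continuous_on_compose2[OF \<Phi>(1)]) (auto intro: continuous_intros)
  then show ?thesis unfolding is_lift_def using \<Phi>(2) by blast
qed

section \<open>Translation by lattice vectors\<close>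

lemma is_lift_translate:
  assumes "is_lift p e t f F"
  shows "is_lift p e t f (\<lambda>z. F (z + Emb e m))"
proof -
  have "continuous_on UNIV F" using assms by (simp add: is_lift_def)
  then have "continuous_on UNIV (\<lambda>z. F (z + Emb e m))"
    by (rule continuous_on_compose2) (auto intro!: continuous_intros)
  moreover have "expm e (z + Emb e m) = expm e z" for z
    by (simp add: vec_eq_iff expm_add expm_Emb e_pos)
  then have "zrel p (expm e (F (z + Emb e m)), t) (f (expm e z, t))" for z
    using assms unfolding is_lift_def by metis
  ultimately show ?thesis by (simp add: is_lift_def)
qed

lemma is_lift_diff_in_Lat:
  assumes t: "t \<in> punct_disc" and F: "is_lift p e t f F" and G: "is_lift p e t f G"
  shows "G z - F z \<in> Lat p e t"
proof -
  have F_z: "zrel p (expm e (F z), t) (f (expm e z, t))"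
    and G_z: "zrel p (expm e (G z), t) (f (expm e z, t))"
    using F G unfolding is_lift_def by auto
  have "zrel p (f (expm e z, t)) (expm e (G z), t)"
    using zrel_sym[OF _ G_z] t by simp
  then have "zrel p (expm e (F z), t) (expm e (G z), t)"
    using zrel_trans[OF _ F_z] t by simp
  then show ?thesis by (rule zrel_expm_imp_diff_in_Lat)
qed

lemma is_lift_diff_constant:
  assumes t: "t \<in> punct_disc" and F: "is_lift p e t f F" and G: "is_lift p e t f G"
  shows "G z - F z = G w - F w"
proof (rule Lat_valued_constant[OF t connected_UNIV, of "\<lambda>z. G z - F z"])
  show "continuous_on UNIV (\<lambda>z. G z - F z)"
    using F G unfolding is_lift_def by (blast intro: continuous_on_diff)
qed (use is_lift_diff_in_Lat[OF t F G] in simp_all)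

lemma is_lift_translation_unique:
  assumes t: "t \<in> punct_disc" and F: "is_lift p e t f F" and G: "is_lift p e t f G"
  shows "G (z + Emb e m) - G z = F (w + Emb e m) - F w"
proof -
  have "G (z + Emb e m) - F (z + Emb e m) = G z - F z" by (rule is_lift_diff_constant[OF t F G])
  then have "G (z + Emb e m) - G z = F (z + Emb e m) - F z" by (simp add: algebra_simps)
  also have "\<dots> = F (w + Emb e m) - F w"
    by (rule is_lift_diff_constant[OF t F is_lift_translate[OF F]])
  finally show ?thesis .
qed

text \<open>The image of \<open>E m\<close> under \<open>f\<^sub>*\<close> on \<open>H\<^sub>1(X\<^sub>t, \<int>) = \<Lambda>\<^sub>t\<close>.\<close>

definition translation :: "complex \<Rightarrow> int^'g \<Rightarrow> complex^'g" where
  "translation t m = (SOME F. is_lift p e t f F) (Emb e m) - (SOME F. is_lift p e t f F) 0"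

lemma is_lift_translation:
  assumes t: "t \<in> punct_disc" and F: "is_lift p e t f F"
  shows "F (z + Emb e m) - F z = translation t m"
  using is_lift_translation_unique[OF t someI_ex[OF lift_exists[OF t]] F, of z m 0]
  by (simp add: translation_def)

lemma translation_in_Lat:
  assumes t: "t \<in> punct_disc"
  shows "translation t m \<in> Lat p e t"
proof -
  obtain F where F: "is_lift p e t f F" using lift_exists[OF t] by blast
  have "translation t m = F (0 + Emb e m) - F 0" by (rule is_lift_translation[OF t F, symmetric])
  then show ?thesis using is_lift_diff_in_Lat[OF t F is_lift_translate[OF F], of 0] by simp
qed

lemma translation_add:
  assumes t: "t \<in> punct_disc"
  shows "translation t (m + m') = translation t m + translation t m'"
proof -
  obtain F where F: "is_lift p e t f F" using lift_exists[OF t] by blast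
  have "translation t (m + m') = (F (Emb e m + Emb e m') - F (Emb e m)) + (F (0 + Emb e m) - F 0)"
    using is_lift_translation[OF t F, of 0 "m + m'"] by (simp add: Emb_add)
  then show ?thesis
    using is_lift_translation[OF t F, of "Emb e m" m'] is_lift_translation[OF t F, of 0 m]
    by (simp add: add.commute)
qed

lemma continuous_on_translation: "continuous_on punct_disc (\<lambda>t. translation t m)"
proof (rule continuous_on_if_locally_continuous)
  fix t0 assume "t0 \<in> punct_disc"
  then obtain r where r: "r > 0" "ball t0 r \<subseteq> punct_disc"
    using open_punct_disc open_contains_ball by blast
  then obtain \<Phi> where \<Phi>: "continuous_on (UNIV \<times> ball t0 r) \<Phi>"
      "\<And>z t. t \<in> ball t0 r \<Longrightarrow> zrel p (expm e (\<Phi> (z, t)), t) (f (expm e z, t))"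
    using lift_exists_on[OF convex_ball] by metis
  have \<Phi>_z: "continuous_on (ball t0 r) (\<lambda>t. \<Phi> (z, t))" for z
    by (rule continuous_on_compose2[OF \<Phi>(1)]) (auto intro: continuous_intros)
  have eq: "translation t m = \<Phi> (Emb e m, t) - \<Phi> (0, t)" if t: "t \<in> ball t0 r" for t
  proof -
    have "continuous_on UNIV (\<lambda>z. \<Phi> (z, t))"
      by (rule continuous_on_compose2[OF \<Phi>(1)]) (use t in \<open>auto intro: continuous_intros\<close>)
    then have "is_lift p e t f (\<lambda>z. \<Phi> (z, t))"
      unfolding is_lift_def using \<Phi>(2)[OF t] by blast
    from is_lift_translation[OF subsetD[OF r(2) t] this, of 0 m] show ?thesis by simp
  qed
  have "continuous_on (ball t0 r) (\<lambda>t. translation t m)"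
    by (rule continuous_on_eq[OF continuous_on_diff[OF \<Phi>_z \<Phi>_z]]) (simp add: eq)
  then have "continuous_on (ball t0 r \<inter> punct_disc) (\<lambda>t. translation t m)"
    using r(2) by (simp add: Int_absorb2)
  with r(1) show "\<exists>N. open N \<and> t0 \<in> N \<and> continuous_on (N \<inter> punct_disc) (\<lambda>t. translation t m)"
    by (intro exI[of _ "ball t0 r"]) simp
qed

lemma is_lift_comp:
  assumes t: "t \<in> punct_disc" and F: "is_lift p e t f F" and F': "is_lift p e t f' F'"
    and f'_dom_rep: "\<And>x. x \<in> dom_rep \<Longrightarrow> f' x \<in> dom_rep"
    and g: "\<And>x. x \<in> dom_rep \<Longrightarrow> zrel p (g x) (f (f' x))"
  shows "is_lift p e t g (\<lambda>z. F (F' z))"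
  unfolding is_lift_def
proof
  show "continuous_on UNIV (\<lambda>z. F (F' z))"
    using F F' unfolding is_lift_def by (auto intro: continuous_on_compose2)
  show "\<forall>z. zrel p (expm e (F (F' z)), t) (g (expm e z, t))"
  proof
    fix z
    define x0 where "x0 = (expm e z, t)"
    define x1 where "x1 = (expm e (F' z), t)"
    have x0: "x0 \<in> dom_rep" and x1: "x1 \<in> dom_rep"
      using t by (auto simp: x0_def x1_def dom_rep_def expm_nonzero)
    have "zrel p (expm e (F (F' z)), t) (f x1)" using F unfolding is_lift_def x1_def by blast
    moreover have "zrel p (f x1) (f (f' x0))"
      using F' f_zrel[OF x1 f'_dom_rep[OF x0]] unfolding is_lift_def x0_def x1_def by blast
    ultimately have to_ff': "zrel p (expm e (F (F' z)), t) (f (f' x0))"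
      using zrel_trans[of "(expm e (F (F' z)), t)"] t by simp
    have "snd (g x0) = t" using zrel_snd[OF to_ff'] zrel_snd[OF g[OF x0]] by simp
    then have "zrel p (f (f' x0)) (g x0)" using zrel_sym[OF _ g[OF x0]] t by simp
    with to_ff' show "zrel p (expm e (F (F' z)), t) (g (expm e z, t))"
      using zrel_trans[of "(expm e (F (F' z)), t)"] t unfolding x0_def by simp
  qed
qed

end

section \<open>Monodromy at the puncture\<close>

lemma prod_power_int_same_base:
  fixes w :: "'a::field"
  assumes "w \<noteq> 0"
  shows "(\<Prod>j\<in>A. w powi c j) = w powi (\<Sum>j\<in>A. c j)"
  using assms by (induction A rule: infinite_finite_induct) (simp_all add: power_int_add)

text \<open>Along the loop \<open>\<gamma>(s) = r e\<^sup>i\<^sup>s\<close>, the function \<open>h(\<gamma>(s)) - i k s\<close> has constant exponential,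
  so it is constant; closing the loop shows \<open>2\<pi>i k = 0\<close>.\<close>

lemma continuous_logarithm_power_int_sphere_imp_zero:
  fixes h :: "complex \<Rightarrow> complex" and k :: int
  assumes r: "r > 0" and h: "continuous_on (sphere 0 r) h"
    and log: "\<And>w. w \<in> sphere 0 r \<Longrightarrow> w powi k = exp (h w)"
  shows "k = 0"
proof -
  define \<gamma> where "\<gamma> s = of_real r * exp (\<i> * of_real s)" for s :: real
  have \<gamma>: "\<gamma> s \<in> sphere 0 r" for s using r by (simp add: \<gamma>_def norm_mult)
  define \<phi> where "\<phi> s = h (\<gamma> s) - \<i> * of_int k * of_real s" for s :: real
  have "continuous_on {0..2*pi} \<gamma>" unfolding \<gamma>_def by (intro continuous_intros)
  then have \<phi>_cont: "continuous_on {0..2*pi} \<phi>" unfolding \<phi>_def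
    by (intro continuous_intros continuous_on_compose2[OF h]) (use \<gamma> in auto)
  have exp_\<phi>: "exp (\<phi> s) = of_real r powi k" for s
  proof -
    have "exp (h (\<gamma> s)) = of_real r powi k * exp (of_int k * (\<i> * of_real s))"
      using log[OF \<gamma>] unfolding \<gamma>_def by (simp add: power_int_mult_distrib exp_power_int)
    then show ?thesis unfolding \<phi>_def by (simp add: exp_diff mult_ac)
  qed
  define \<psi> where "\<psi> s = (\<phi> s - \<phi> 0) / (2 * of_real pi * \<i>)" for s
  have "continuous_on {0..2*pi} \<psi>" unfolding \<psi>_def by (intro continuous_intros \<phi>_cont) auto
  moreover have "\<psi> s \<in> \<int>" for s
  proof -
    have "exp (2 * of_real pi * \<i> * \<psi> s) = exp (\<phi> s) / exp (\<phi> 0)"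
      unfolding \<psi>_def by (simp add: exp_diff)
    also have "\<dots> = 1" using exp_\<phi> r by simp
    finally show ?thesis using exp_2pi_i_eq_1_iff by blast
  qed
  ultimately have "\<psi> (2*pi) = \<psi> 0"
    using continuous_Ints_valued_constant[OF connected_Icc] pi_gt_zero by fastforce
  moreover have "\<gamma> (2*pi) = \<gamma> 0" unfolding \<gamma>_def by (simp add: exp_eq_1)
  then have "\<psi> (2*pi) = - of_int k" unfolding \<psi>_def \<phi>_def by (simp add: field_simps)
  ultimately show ?thesis by (simp add: \<psi>_def)
qed

locale maximally_degenerating_family = family_of_tori p e
  for p :: "'g::finite \<Rightarrow> 'g \<Rightarrow> complex \<Rightarrow> complex" and e +
  assumes p_merom: "\<And>i j. not_essential (p i j) 0"
    and max_degen: "det (\<chi> i j. of_int (zorder (p i j) 0) :: real^'g^'g) \<noteq> 0"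
begin

lemma p_local_factorisation:
  "\<exists>R G. R > 0 \<and> G holomorphic_on cball 0 R \<and> (\<forall>w\<in>cball 0 R. G w \<noteq> 0) \<and>
    (\<forall>w\<in>cball 0 R - {0}. p i j w = G w * w powi zorder (p i j) 0)"
proof -
  have iso: "isolated_singularity_at (p i j) 0"
    unfolding isolated_singularity_at_def using p_holo open_punct_disc
    by (intro exI[of _ 1]) (auto simp: analytic_on_open punct_disc_def)
  have "eventually (\<lambda>w. p i j w \<noteq> 0) (at 0)"
    unfolding eventually_at by (rule exI[of _ 1]) (auto intro!: p_nonzero simp: punct_disc_def)
  then have "\<exists>\<^sub>F w in at 0. p i j w \<noteq> 0"
    by (rule eventually_frequently[rotated]) (simp add: trivial_limit_at)
  from zorder_exist[OF iso p_merom this] show ?thesis by auto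
qed

lemma p_factorisation:
  obtains r G where "r > 0" "r < 1" "\<And>i j. G i j holomorphic_on cball 0 r"
    "\<And>i j w. w \<in> cball 0 r \<Longrightarrow> G i j w \<noteq> 0"
    "\<And>i j w. w \<in> cball 0 r - {0} \<Longrightarrow> p i j w = G i j w * w powi zorder (p i j) 0"
proof -
  from p_local_factorisation obtain R G where RG: "\<And>i j. R i j > 0"
     "\<And>i j. G i j holomorphic_on cball 0 (R i j)" "\<And>i j w. w \<in> cball 0 (R i j) \<Longrightarrow> G i j w \<noteq> 0"
     "\<And>i j w. w \<in> cball 0 (R i j) - {0} \<Longrightarrow> p i j w = G i j w * w powi zorder (p i j) 0"
    by metis
  define r where "r = Min (insert (1/2) (range (\<lambda>(i, j). R i j)))"
  have fin: "finite (insert (1/2) (range (\<lambda>(i, j). R i j)))" by simp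
  have "r > 0" unfolding r_def using RG(1) by (subst Min_gr_iff[OF fin]) auto
  moreover have "r < 1" "r \<le> R i j" for i j
    unfolding r_def using Min_le[OF fin] by (fastforce intro: range_eqI[of _ _ "(i, j)"])+
  moreover from this(2) have sub: "cball 0 r \<subseteq> cball 0 (R i j)" for i j by (rule subset_cball)
  ultimately show thesis
  proof (intro that[of r G])
    show "G i j holomorphic_on cball 0 r" for i j using holomorphic_on_subset[OF RG(2) sub] .
    show "w \<in> cball 0 r \<Longrightarrow> G i j w \<noteq> 0" for i j w using RG(3) sub by blast
    show "w \<in> cball 0 r - {0} \<Longrightarrow> p i j w = G i j w * w powi zorder (p i j) 0" for i j w
      using RG(4) sub by blast
  qed
qed

text \<open>Near \<open>0\<close>, the \<open>i\<close>-th component of \<open>period_factor p t n\<close> is a nowhere vanishing holomorphic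
  function times \<open>t\<^sup>s\<close> with \<open>s = \<Sum>\<^sub>j ord\<^sub>0(p\<^sub>i\<^sub>j) n\<^sub>j\<close>; a continuous logarithm of it along a small
  circle forces \<open>s = 0\<close>.\<close>

lemma zorder_row_sum_zero:
  assumes V: "continuous_on punct_disc V"
    and V_index: "\<And>t. t \<in> punct_disc \<Longrightarrow> expm e (V t) = (\<chi> i. period_factor p t n i)"
  shows "(\<Sum>j\<in>UNIV. zorder (p i j) 0 * n $ j) = 0"
proof -
  obtain r G where r: "r > 0" "r < 1" and G: "\<And>j. G i j holomorphic_on cball 0 r"
      "\<And>j w. w \<in> cball 0 r \<Longrightarrow> G i j w \<noteq> 0"
      "\<And>j w. w \<in> cball 0 r - {0} \<Longrightarrow> p i j w = G i j w * w powi zorder (p i j) 0"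
    using p_factorisation by metis
  define U where "U w = (\<Prod>j\<in>UNIV. G i j w powi (n $ j))" for w
  have "continuous_on (cball 0 r) U"
    unfolding U_def using G(2)
    by (intro continuous_on_prod continuous_on_power_int holomorphic_on_imp_continuous_on G(1)) auto
  moreover have "U w \<noteq> 0" if "w \<in> cball 0 r" for w using G(2)[OF that] by (simp add: U_def)
  ultimately obtain L where L: "continuous_on (cball 0 r) L" "\<And>w. w \<in> cball 0 r \<Longrightarrow> U w = exp (L w)"
    using continuous_logarithm_on_cball by metis
  have sphere: "sphere 0 r \<subseteq> punct_disc" "sphere 0 r \<subseteq> cball 0 r"
    using r by (auto simp: punct_disc_def)
  define h where "h w = 2 * of_real pi * \<i> * V w $ i / of_nat (e i) - L w" for w
  show ?thesis
  proof (rule continuous_logarithm_power_int_sphere_imp_zero[OF r(1)])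
    show "continuous_on (sphere 0 r) h" unfolding h_def using e_pos[of i]
      by (intro continuous_intros continuous_on_subset[OF V sphere(1)]
          continuous_on_subset[OF L(1) sphere(2)]) auto
    fix w :: complex assume w: "w \<in> sphere 0 r"
    then have w0: "w \<noteq> 0" and "w \<in> cball 0 r - {0}" using r(1) by auto
    then have "period_factor p w n i = (\<Prod>j\<in>UNIV. (G i j w * w powi zorder (p i j) 0) powi (n $ j))"
      by (simp add: period_factor_def G(3))
    also have "\<dots> = U w * (\<Prod>j\<in>UNIV. w powi (zorder (p i j) 0 * n $ j))"
      by (simp add: U_def power_int_mult_distrib power_int_mult prod.distrib)
    also have "\<dots> = U w * w powi (\<Sum>j\<in>UNIV. zorder (p i j) 0 * n $ j)"
      by (simp only: prod_power_int_same_base[OF w0])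
    finally have "period_factor p w n i = U w * w powi (\<Sum>j\<in>UNIV. zorder (p i j) 0 * n $ j)" .
    moreover have "exp (2 * of_real pi * \<i> * V w $ i / of_nat (e i)) = period_factor p w n i"
      using V_index[OF subsetD[OF sphere(1) w]] by (simp add: vec_eq_iff expm_nth)
    ultimately show "w powi (\<Sum>j\<in>UNIV. zorder (p i j) 0 * n $ j) = exp (h w)"
      using L(2)[of w] w sphere(2) by (auto simp: h_def exp_diff)
  qed
qed

lemma continuous_Lat_section_index_zero:
  assumes "continuous_on punct_disc V"
    and "\<And>t. t \<in> punct_disc \<Longrightarrow> expm e (V t) = (\<chi> i. period_factor p t n i)"
  shows "n = 0"
proof -
  define M :: "real^'g^'g" where "M = (\<chi> i j. of_int (zorder (p i j) 0))"
  define x :: "real^'g" where "x = (\<chi> j. of_int (n $ j))"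
  have "M *v x = 0"
    using zorder_row_sum_zero[OF assms]
    by (simp add: vec_eq_iff M_def x_def matrix_vector_mult_def flip: of_int_mult of_int_sum)
  moreover obtain B where "B ** M = mat 1"
    using max_degen unfolding M_def by (metis invertible_det_nz invertible_def)
  ultimately have "x = 0"
    by (metis matrix_vector_mul_assoc matrix_vector_mul_lid matrix_vector_mult_0_right)
  then show ?thesis by (simp add: x_def vec_eq_iff)
qed

lemma continuous_Lat_section_eq_Emb:
  assumes V: "continuous_on punct_disc V" and Lat: "\<And>t. t \<in> punct_disc \<Longrightarrow> V t \<in> Lat p e t"
  shows "\<exists>k. \<forall>t\<in>punct_disc. V t = Emb e k"
proof -
  obtain n where n: "\<And>t. t \<in> punct_disc \<Longrightarrow> expm e (V t) = (\<chi> i. period_factor p t n i)"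
    using Lat_index_constant[OF connected_punct_disc V continuous_on_id _ Lat] by auto
  then have "n = 0" by (rule continuous_Lat_section_index_zero[OF V])
  then have one: "expm e (V t) = (\<chi> i. 1)" if "t \<in> punct_disc" for t using n[OF that] by simp
  have half: "1/2 \<in> punct_disc" by (simp add: punct_disc_def)
  obtain k where "V (1/2) = Emb e k"
    using expm_eq_1_imp_Emb[of e, OF e_pos] one[OF half] by (metis vec_lambda_beta)
  moreover have "V t = V (1/2)" if "t \<in> punct_disc" for t
    by (rule expm_constant_imp_constant[of e, OF e_pos connected_punct_disc V one that half])
  ultimately show ?thesis by auto
qed

end

section \<open>The translation matrices\<close>

lemma additive_int_vec_map_eq_matrix:
  fixes A :: "int^'n \<Rightarrow> int^'m"
  assumes "Modules.additive A"
  shows "A m = (\<chi> i j. A (axis j 1) $ i) *v m"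
proof -
  interpret additive A by (fact assms)
  have scale: "A (k *s x) = k *s A x" for k x
  proof (induction k rule: int_induct[of _ 0])
    case (step1 i)
    then show ?case using add[of "i *s x" x] by (simp add: vec_eq_iff algebra_simps)
  next
    case (step2 i)
    then show ?case using diff[of "i *s x" x] by (simp add: vec_eq_iff algebra_simps)
  qed (simp add: zero vec_eq_iff)
  have "A m = A (\<Sum>j\<in>UNIV. m $ j *s axis j 1)"
    by (rule arg_cong[where f = A]) (simp add: vec_eq_iff axis_def if_distrib cong: if_cong)
  also have "\<dots> = (\<Sum>j\<in>UNIV. m $ j *s A (axis j 1))" by (simp add: sum scale)
  also have "\<dots> = (\<chi> i j. A (axis j 1) $ i) *v m"
    by (auto simp: vec_eq_iff matrix_vector_mult_def mult.commute intro!: sum.cong)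
  finally show ?thesis .
qed

lemma (in group) invertible_if_multiplicative:
  fixes l :: "'a \<Rightarrow> 'r::semiring_1^'n^'n"
  assumes mult: "\<And>h h'. h \<in> carrier G \<Longrightarrow> h' \<in> carrier G \<Longrightarrow> l (h \<otimes> h') = l h ** l h'"
    and one: "l \<one> = mat 1" and h: "h \<in> carrier G"
  shows "invertible (l h)"
  unfolding invertible_def
proof (intro exI conjI)
  show "l h ** l (inv h) = mat 1" using mult[of h "inv h"] one h by simp
  show "l (inv h) ** l h = mat 1" using mult[of "inv h" h] one h by simp
qed

locale degenerating_fibrewise_map = fibrewise_map p e f + maximally_degenerating_family p e
  for p :: "'g::finite \<Rightarrow> 'g \<Rightarrow> complex \<Rightarrow> complex" and e f
begin

lemma translation_matrix_exists:
  "\<exists>L. \<forall>t\<in>punct_disc. \<forall>F. is_lift p e t f F \<longrightarrow> (\<forall>m z. F (z + Emb e m) - F z = Emb e (L *v m))"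
proof -
  have "\<exists>k. \<forall>t\<in>punct_disc. translation t m = Emb e k" for m
    by (rule continuous_Lat_section_eq_Emb[OF continuous_on_translation translation_in_Lat])
  then obtain k where k: "\<And>m t. t \<in> punct_disc \<Longrightarrow> translation t m = Emb e (k m)" by metis
  have "Modules.additive k"
  proof
    fix m m'
    have "Emb e (k (m + m')) = Emb e (k m + k m')"
      using translation_add[OF half_in_punct_disc] k[OF half_in_punct_disc] by (simp add: Emb_add)
    then show "k (m + m') = k m + k m'" by (rule Emb_inj[of e, OF e_pos])
  qed
  then show ?thesis
    using is_lift_translation k additive_int_vec_map_eq_matrix by metis
qed

end

context maximally_degenerating_family
begin

definition translation_matrix :: "((complex^'g) \<times> complex \<Rightarrow> (complex^'g) \<times> complex) \<Rightarrow> int^'g^'g"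
  where "translation_matrix f = (SOME L. \<forall>t\<in>punct_disc. \<forall>F. is_lift p e t f F \<longrightarrow>
    (\<forall>m z. F (z + Emb e m) - F z = Emb e (L *v m)))"

lemma is_lift_translation_matrix:
  assumes "fibrewise_map p e f" "t \<in> punct_disc" "is_lift p e t f F"
  shows "F (z + Emb e m) - F z = Emb e (translation_matrix f *v m)"
proof -
  interpret degenerating_fibrewise_map p e f
    using assms(1) maximally_degenerating_family_axioms
    by (simp add: degenerating_fibrewise_map_def)
  show ?thesis
    using someI_ex[OF translation_matrix_exists] assms(2,3)
    unfolding translation_matrix_def by blast
qed

lemma translation_matrix_comp:
  assumes f: "fibrewise_map p e f" and f': "fibrewise_map p e f'" and g: "fibrewise_map p e g"
    and g_eq: "\<And>x. x \<in> dom_rep \<Longrightarrow> zrel p (g x) (f (f' x))"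
  shows "translation_matrix g = translation_matrix f ** translation_matrix f'"
proof -
  note t = half_in_punct_disc
  obtain F F' where F: "is_lift p e (1/2) f F" and F': "is_lift p e (1/2) f' F'"
    using fibrewise_map.lift_exists[OF f t] fibrewise_map.lift_exists[OF f' t] by blast
  have G: "is_lift p e (1/2) g (\<lambda>z. F (F' z))"
    by (rule fibrewise_map.is_lift_comp[OF f t F F' fibrewise_map.f_dom_rep[OF f'] g_eq])
  have "translation_matrix g *v m = (translation_matrix f ** translation_matrix f') *v m" for m
  proof -
    have "Emb e (translation_matrix g *v m) = F (F' (0 + Emb e m)) - F (F' 0)"
      using is_lift_translation_matrix[OF g t G, of 0 m] by simp
    also have "F' (0 + Emb e m) = F' 0 + Emb e (translation_matrix f' *v m)"
      using is_lift_translation_matrix[OF f' t F', of 0 m] by (simp add: algebra_simps)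
    also have "F (F' 0 + Emb e (translation_matrix f' *v m)) - F (F' 0)
        = Emb e (translation_matrix f *v (translation_matrix f' *v m))"
      by (rule is_lift_translation_matrix[OF f t F])
    finally show ?thesis
      using Emb_inj[of e, OF e_pos] by (simp add: matrix_vector_mul_assoc)
  qed
  then show ?thesis by (simp add: matrix_eq)
qed

lemma translation_matrix_id:
  assumes g: "fibrewise_map p e g" and g_eq: "\<And>x. x \<in> dom_rep \<Longrightarrow> zrel p (g x) x"
  shows "translation_matrix g = mat 1"
proof -
  note t = half_in_punct_disc
  have "zrel p (expm e z, 1/2) (g (expm e z, 1/2))" for z
  proof -
    have x: "(expm e z, 1/2) \<in> dom_rep" using t by (simp add: dom_rep_def expm_nonzero)
    have "snd (g (expm e z, 1/2)) \<in> punct_disc" using zrel_snd[OF g_eq[OF x]] t by (metis snd_conv)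
    then show ?thesis by (rule zrel_sym[OF _ g_eq[OF x]])
  qed
  then have "is_lift p e (1/2) g (\<lambda>z. z)" by (simp add: is_lift_def)
  from is_lift_translation_matrix[OF g t this, of 0]
  have "translation_matrix g *v m = mat 1 *v m" for m
    using Emb_inj[of e, OF e_pos] by simp
  then show ?thesis by (simp add: matrix_eq)
qed

end

theorem lemma2p7:
  fixes p :: "'g::{linorder,finite} \<Rightarrow> 'g \<Rightarrow> complex \<Rightarrow> complex"
    and e :: "'g \<Rightarrow> nat"
    and H :: "('h, 'b) monoid_scheme"
    and act :: "'h \<Rightarrow> (complex, 'g) vec \<times> complex \<Rightarrow> (complex, 'g) vec \<times> complex"
  assumes e_pos: "\<And>i. e i > 0"
    and e_dvd: "\<And>i j. i \<le> j \<Longrightarrow> e i dvd e j"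
    and p_holo: "\<And>i j. p i j holomorphic_on punct_disc"
    and p_nonzero: "\<And>i j t. t \<in> punct_disc \<Longrightarrow> p i j t \<noteq> 0"
    and p_merom: "\<And>i j. not_essential (p i j) 0"
    and q_sym: "\<And>i j t. t \<in> punct_disc \<Longrightarrow> qmat p e i j t = qmat p e j i t"
    and polarized: "\<And>t x. t \<in> punct_disc \<Longrightarrow> x \<noteq> 0 \<Longrightarrow> x \<bullet> (ImOm p e t *v x) > 0"
    and max_degen: "det (\<chi> i j. of_int (zorder (p i j) 0) :: ((real, 'g) vec, 'g) vec) \<noteq> 0"
    and grp: "group H"
    and act_holo: "\<And>h. h \<in> carrier H \<Longrightarrow> holo_action_map p (act h)"
    and act_fibre: "\<And>h x. h \<in> carrier H \<Longrightarrow> x \<in> dom_rep \<Longrightarrow> snd (act h x) = snd x"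
    and act_one: "\<And>x. x \<in> dom_rep \<Longrightarrow> zrel p (act \<one>\<^bsub>H\<^esub> x) x"
    and act_mult: "\<And>h h' x. h \<in> carrier H \<Longrightarrow> h' \<in> carrier H \<Longrightarrow> x \<in> dom_rep \<Longrightarrow>
        zrel p (act (h \<otimes>\<^bsub>H\<^esub> h') x) (act h (act h' x))"
    and act_c1: "\<And>h t F z v w. h \<in> carrier H \<Longrightarrow> t \<in> punct_disc \<Longrightarrow> is_lift p e t (act h) F \<Longrightarrow>
        v \<in> Lat p e t \<Longrightarrow> w \<in> Lat p e t \<Longrightarrow>
        c1form p e t (F (z + v) - F z) (F (z + w) - F z) = c1form p e t v w"
  shows "\<exists>l :: 'h \<Rightarrow> ((int, 'g) vec, 'g) vec.
           (\<forall>h\<in>carrier H. invertible (l h)) \<and>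
           (\<forall>h\<in>carrier H. \<forall>h'\<in>carrier H. l (h \<otimes>\<^bsub>H\<^esub> h') = l h ** l h') \<and>
           (\<forall>h\<in>carrier H. \<forall>t\<in>punct_disc. \<forall>F. is_lift p e t (act h) F \<longrightarrow>
              (\<forall>m z. F (z + Emb e m) - F z = Emb e (l h *v m)))"
proof -
  interpret maximally_degenerating_family p e
    using e_pos p_holo p_nonzero p_merom max_degen det_nonzero_if_positive_definite[OF polarized]
    by unfold_locales auto
  interpret H: group H by (fact grp)
  have fibrewise: "fibrewise_map p e (act h)" if "h \<in> carrier H" for h
    using act_holo[OF that] act_fibre[OF that] family_of_tori_axioms
    by (simp add: fibrewise_map_def fibrewise_map_axioms_def)
  define l where "l h = translation_matrix (act h)" for h
  have mult: "l (h \<otimes>\<^bsub>H\<^esub> h') = l h ** l h'" if "h \<in> carrier H" "h' \<in> carrier H" for h h'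
    unfolding l_def using that act_mult
    by (intro translation_matrix_comp fibrewise) auto
  have one: "l \<one>\<^bsub>H\<^esub> = mat 1"
    unfolding l_def using act_one by (intro translation_matrix_id fibrewise) auto
  show ?thesis
  proof (intro exI[of _ l] conjI ballI allI impI)
    show "invertible (l h)" if "h \<in> carrier H" for h
      by (rule H.invertible_if_multiplicative[OF mult one that])
    show "l (h \<otimes>\<^bsub>H\<^esub> h') = l h ** l h'" if "h \<in> carrier H" "h' \<in> carrier H" for h h'
      using mult that .
    show "F (z + Emb e m) - F z = Emb e (l h *v m)"
      if "h \<in> carrier H" "t \<in> punct_disc" "is_lift p e t (act h) F" for h t F m z
      unfolding l_def using is_lift_translation_matrix[OF fibrewise] that .
  qed
qed

end
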